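(* There are infinitely many binary strings $w$ (strings over a two-letter alphabet) such that $\sigma(w)/|w| > 2.035$, where $\sigma(w)$ denotes the sum of the exponents of all runs in $w$.
   Context: For a word $u=u_1\cdots u_m$ over a finite alphabet, the (shortest) period $\mathrm{per}(u)$ is the smallest positive integer $p$ such that $u_i=u_{i+p}$ for all $1\le i\le m-p$; $u[i..j]$ denotes the factor $u_i\cdots u_j$. A run in a word $u$ is an interval $[i..j]$ of positions such that the period $p$ of $u[i..j]$ satisfies $2p\le j-i+1$, and the interval cannot be extended to the left or right without violating this, i.e. $u[i-1]\ne u[i+p-1]$ (or $i=1$) and $u[j-p+1]\ne u[j+1]$ (or $j=|u|$). The exponent of such a run is $(j-i+1)/p$. $\sigma(u)$ is the sum of exponents of all runs in $u$. *)

theory Defs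
  imports Complex_Main
begin

text \<open>Words are lists; positions are 0-indexed here (the paper uses 1-indexed).\<close>

definition is_period :: "'a list \<Rightarrow> nat \<Rightarrow> bool" where
  "is_period u p \<longleftrightarrow> 0 < p \<and> (\<forall>i. i + p < length u \<longrightarrow> u ! i = u ! (i + p))"

definition per :: "'a list \<Rightarrow> nat" where
  "per u = (LEAST p. is_period u p)"

definition factor :: "'a list \<Rightarrow> nat \<Rightarrow> nat \<Rightarrow> 'a list" where
  "factor u i j = take (Suc j - i) (drop i u)"

definition is_run :: "'a list \<Rightarrow> nat \<Rightarrow> nat \<Rightarrow> bool" where
  "is_run u i j \<longleftrightarrow> i \<le> j \<and> j < length u \<and>
     (let p = per (factor u i j) in
        2 * p \<le> j - i + 1 \<and>
        (i = 0 \<or> u ! (i - 1) \<noteq> u ! (i + p - 1)) \<and>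
        (j + 1 = length u \<or> u ! (j + 1 - p) \<noteq> u ! (j + 1)))"

definition runs :: "'a list \<Rightarrow> (nat \<times> nat) set" where
  "runs u = {(i, j). is_run u i j}"

definition run_exponent :: "'a list \<Rightarrow> nat \<times> nat \<Rightarrow> real" where
  "run_exponent u r = real (snd r - fst r + 1) / real (per (factor u (fst r) (snd r)))"

definition sigma :: "'a list \<Rightarrow> real" where
  "sigma u = (\<Sum>r\<in>runs u. run_exponent u r)"

end

theory Submission
  imports Defs "HOL-Library.Product_Lexorder"
begin

text \<open>
  Let \<open>w\<close> be a fixed binary word of length 475 found by computer search. It has 443 runs in \<open>w\<^sup>3\<close>
  that start inside the first copy of \<open>w\<close> and stop before the end of \<open>w\<^sup>3\<close>, of total exponent
  \<open>S > 966.66\<close>. Periodicity of \<open>w\<^sup>k\<close> carries each of them to \<open>k - 2\<close> distinct runs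
  of \<open>w\<^sup>k\<close> with the same exponent, and \<open>w\<^sup>k\<close> is itself a run of exponent \<open>k\<close>. Hence
  \<open>\<sigma>(w\<^sup>k) \<ge> (k - 2) S + k\<close>, and \<open>\<sigma>(w\<^sup>k) / |w\<^sup>k|\<close> tends to \<open>(S + 1) / 475 > 2.035\<close>.
  The runs are certified through some period of their factor rather than the shortest one;
  this suffices because, by the weak Fine--Wilf theorem, the shortest period divides it.
\<close>

lemma is_period_pos: "is_period u p \<Longrightarrow> 0 < p"
  by (simp add: is_period_def)

lemma is_period_nth_add_mult:
  assumes "is_period u q" "a + c * q < length u"
  shows "u ! a = u ! (a + c * q)"
  using assms(2)
proof (induction c)
  case (Suc c)
  have "u ! a = u ! (a + c * q)" using Suc by simp
  also have "\<dots> = u ! (a + c * q + q)"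
    using assms(1) Suc.prems unfolding is_period_def by (simp add: algebra_simps)
  finally show ?case by (simp add: algebra_simps)
qed simp

lemma is_period_diff:
  assumes p: "is_period u p" and q: "is_period u q" and "q < p" "p + q \<le> length u"
  shows "is_period u (p - q)"
  unfolding is_period_def
proof (intro conjI allI impI)
  show "0 < p - q" using \<open>q < p\<close> by simp
  fix i assume i: "i + (p - q) < length u"
  show "u ! i = u ! (i + (p - q))"
  proof (cases "i + p < length u")
    case True
    then have "u ! i = u ! (i + (p - q) + q)"
      using p \<open>q < p\<close> unfolding is_period_def by simp
    also have "\<dots> = u ! (i + (p - q))"
      using q True \<open>q < p\<close> unfolding is_period_def by simp
    finally show ?thesis .
  next
    case False
    then have "q \<le> i" using \<open>p + q \<le> length u\<close> by linarith
    have "u ! (i - q) = u ! (i - q + q)"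
      using q i \<open>q \<le> i\<close> \<open>q < p\<close> unfolding is_period_def by simp
    moreover have "u ! (i - q) = u ! (i - q + p)"
      using p i \<open>q \<le> i\<close> \<open>q < p\<close> unfolding is_period_def by simp
    ultimately show ?thesis using \<open>q \<le> i\<close> \<open>q < p\<close> by simp
  qed
qed

text \<open>A weak form of the Fine--Wilf theorem, proved along Euclid's algorithm.\<close>
lemma is_period_gcd:
  "is_period u p \<Longrightarrow> is_period u q \<Longrightarrow> p + q \<le> length u \<Longrightarrow> is_period u (gcd p q)"
proof (induction "p + q" arbitrary: p q rule: less_induct)
  case less
  show ?case
  proof (cases p q rule: linorder_cases)
    case equal
    then show ?thesis using less.prems by simp
  next
    case less2: less
    have "is_period u (q - p)" using is_period_diff[of u q p] less.prems less2 by simp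
    moreover have "gcd p (q - p) = gcd p q"
      using less2 by (metis gcd.commute gcd_diff1_nat less_imp_le_nat)
    ultimately show ?thesis
      using less.hyps[of p "q - p"] less.prems less2 is_period_pos[of u p] by simp
  next
    case greater
    have "is_period u (p - q)" using is_period_diff[of u p q] less.prems greater by simp
    moreover have "gcd (p - q) q = gcd p q"
      using greater by (metis gcd_diff1_nat less_imp_le_nat)
    ultimately show ?thesis
      using less.hyps[of "p - q" q] less.prems greater is_period_pos[of u q] by simp
  qed
qed

lemma per_le: "is_period u p \<Longrightarrow> per u \<le> p"
  unfolding per_def by (rule Least_le)

lemma is_period_per: "is_period u p \<Longrightarrow> is_period u (per u)"
  unfolding per_def by (rule LeastI)

lemma per_dvd_period:
  assumes p: "is_period u p" and "2 * p \<le> length u"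
  shows "per u dvd p"
proof -
  have per: "is_period u (per u)" using p by (rule is_period_per)
  have "is_period u (gcd (per u) p)"
    using is_period_gcd[OF per p] per_le[OF p] \<open>2 * p \<le> length u\<close> by simp
  then have "per u \<le> gcd (per u) p" by (rule per_le)
  moreover have "gcd (per u) p \<le> per u" using is_period_pos[OF per] by simp
  ultimately show ?thesis by (metis antisym gcd_dvd2)
qed

lemma length_factor: "j < length u \<Longrightarrow> length (factor u i j) = Suc j - i"
  by (simp add: factor_def)

lemma nth_factor: "j < length u \<Longrightarrow> x < Suc j - i \<Longrightarrow> factor u i j ! x = u ! (i + x)"
  by (simp add: factor_def)

definition maximal_repetition :: "'a list \<Rightarrow> nat \<Rightarrow> nat \<Rightarrow> nat \<Rightarrow> bool" where
  "maximal_repetition u i j p \<longleftrightarrow> 0 < p \<and> 2 * p \<le> j - i + 1 \<and> j < length u \<and>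
     (\<forall>x. i \<le> x \<longrightarrow> x + p \<le> j \<longrightarrow> u ! x = u ! (x + p)) \<and>
     (i = 0 \<or> u ! (i - 1) \<noteq> u ! (i + p - 1)) \<and>
     (j + 1 = length u \<or> u ! (j + 1 - p) \<noteq> u ! (j + 1))"

lemma is_period_factor_if_maximal_repetition:
  assumes "maximal_repetition u i j p"
  shows "is_period (factor u i j) p"
  unfolding is_period_def
proof (intro conjI allI impI)
  show "0 < p" using assms by (simp add: maximal_repetition_def)
  fix x assume "x + p < length (factor u i j)"
  with assms show "factor u i j ! x = factor u i j ! (x + p)"
    by (auto simp: maximal_repetition_def length_factor nth_factor add.assoc[symmetric])
qed

text \<open>The shortest period \<open>q\<close> divides \<open>p\<close>, so \<open>p - q\<close> is a period as well and the
  maximality conditions for \<open>p\<close> and for \<open>q\<close> compare the same letters.\<close>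
lemma is_run_if_maximal_repetition:
  assumes rep: "maximal_repetition u i j p"
  shows "is_run u i j"
proof -
  define q where "q = per (factor u i j)"
  have p: "0 < p" "2 * p \<le> j - i + 1" "j < length u" and "i \<le> j"
    using rep by (auto simp: maximal_repetition_def)
  have len: "length (factor u i j) = j - i + 1" using p \<open>i \<le> j\<close> by (simp add: length_factor)
  have per_p: "is_period (factor u i j) p"
    using rep by (rule is_period_factor_if_maximal_repetition)
  then have per_q: "is_period (factor u i j) q" unfolding q_def by (rule is_period_per)
  have "q dvd p" using per_dvd_period[OF per_p] len p by (simp add: q_def)
  then obtain c where c: "p = c * q" by (metis dvdE mult.commute)
  have "q \<le> p" using per_p by (simp add: q_def per_le)
  have shift: "u ! x = u ! (x + (p - q))" if x: "i \<le> x" "x + (p - q) \<le> j" for x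
  proof -
    have "p - q = (c - 1) * q" using c by (simp add: diff_mult_distrib)
    then have "factor u i j ! (x - i) = factor u i j ! (x - i + (p - q))"
      using is_period_nth_add_mult[OF per_q, of "x - i" "c - 1"] x len by simp
    then show ?thesis using x p by (simp add: nth_factor)
  qed
  have "u ! (i + q - 1) = u ! (i + p - 1)"
    using shift[of "i + q - 1"] p \<open>q \<le> p\<close> is_period_pos[OF per_q] by simp
  moreover have "u ! (j + 1 - q) = u ! (j + 1 - p)"
    using shift[of "j + 1 - p"] p \<open>i \<le> j\<close> \<open>q \<le> p\<close> is_period_pos[OF per_q] by simp
  ultimately show ?thesis
    using rep \<open>q \<le> p\<close> unfolding is_run_def maximal_repetition_def Let_def q_def[symmetric]
    by auto
qed

lemma run_exponent_ge_if_maximal_repetition: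
  assumes "maximal_repetition u i j p"
  shows "real (j - i + 1) / real p \<le> run_exponent u (i, j)"
proof -
  have per: "is_period (factor u i j) p"
    using assms by (rule is_period_factor_if_maximal_repetition)
  have "0 < per (factor u i j)" using is_period_pos[OF is_period_per[OF per]] .
  then show ?thesis using per_le[OF per] by (simp add: run_exponent_def frac_le)
qed

lemma maximal_repetition_shift:
  assumes "maximal_repetition u i j p" "0 < i" "j + 1 < length u"
    and "length u + d \<le> length v" "\<And>x. x < length u \<Longrightarrow> v ! (x + d) = u ! x"
  shows "maximal_repetition v (i + d) (j + d) p"
proof -
  have rep: "0 < p" "2 * p \<le> j - i + 1" "j < length u"
    "\<And>x. i \<le> x \<Longrightarrow> x + p \<le> j \<Longrightarrow> u ! x = u ! (x + p)"
    "u ! (i - 1) \<noteq> u ! (i + p - 1)" "u ! (j + 1 - p) \<noteq> u ! (j + 1)"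
    using assms(1-3) by (auto simp: maximal_repetition_def)
  have v: "v ! (x + d) = u ! x" if "x \<le> j + 1" for x
    using assms(3,5) that by simp
  have inner: "v ! y = v ! (y + p)" if "i + d \<le> y" "y + p \<le> j + d" for y
  proof -
    define x where "x = y - d"
    have "y = x + d" "i \<le> x" "x + p \<le> j" using that by (auto simp: x_def)
    then show ?thesis using v[of x] v[of "x + p"] rep(4) by (simp add: add.commute add.left_commute)
  qed
  have "v ! (i + d - 1) = u ! (i - 1)" "v ! (i + d + p - 1) = u ! (i + p - 1)"
    using v[of "i - 1"] v[of "i + p - 1"] rep assms(2) by (simp_all add: algebra_simps)
  moreover have "v ! (j + d + 1 - p) = u ! (j + 1 - p)" "v ! (j + d + 1) = u ! (j + 1)"
    using v[of "j + 1 - p"] v[of "j + 1"] rep by (simp_all add: algebra_simps)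
  ultimately show ?thesis
    using rep inner assms(3,4) unfolding maximal_repetition_def by auto
qed

lemma finite_runs: "finite (runs u)"
proof (rule finite_subset)
  show "runs u \<subseteq> {..<length u} \<times> {..<length u}"
    unfolding runs_def is_run_def by auto
qed simp

lemma sum_run_exponent_le_sigma: "A \<subseteq> runs u \<Longrightarrow> sum (run_exponent u) A \<le> sigma u"
  unfolding sigma_def by (rule sum_mono2[OF finite_runs]) (auto simp: run_exponent_def)

definition word_pow :: "'a list \<Rightarrow> nat \<Rightarrow> 'a list" where
  "word_pow w k = concat (replicate k w)"

lemma length_word_pow [simp]: "length (word_pow w k) = k * length w"
  by (induction k) (auto simp: word_pow_def)

lemma nth_word_pow: "x < k * length w \<Longrightarrow> word_pow w k ! x = w ! (x mod length w)"
proof (induction k arbitrary: x)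
  case (Suc k)
  have "word_pow w (Suc k) = w @ word_pow w k" by (simp add: word_pow_def)
  then show ?case
    using Suc.IH[of "x - length w"] Suc.prems by (auto simp: nth_append le_mod_geq)
qed simp

lemma nth_word_pow_add_mult:
  assumes "x < l * length w" "x + m * length w < k * length w"
  shows "word_pow w k ! (x + m * length w) = word_pow w l ! x"
  using assms by (simp add: nth_word_pow)

lemma maximal_repetition_word_pow:
  assumes "w \<noteq> []" "2 \<le> k"
  shows "maximal_repetition (word_pow w k) 0 (k * length w - 1) (length w)"
proof -
  have "2 * length w \<le> k * length w" using assms(2) by simp
  moreover have "word_pow w k ! x = word_pow w k ! (x + length w)"
    if "x + length w \<le> k * length w - 1" for x
  proof -
    have "0 < k * length w" using assms by simp
    then have "x + length w < k * length w" using that by linarith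
    then show ?thesis by (simp add: nth_word_pow)
  qed
  ultimately show ?thesis
    using assms(1) unfolding maximal_repetition_def by auto
qed

lemma maximal_repetition_word_pow_shift:
  assumes "maximal_repetition (word_pow w 3) i j p" "0 < i" "j + 1 < 3 * length w"
    and "m + 3 \<le> k"
  shows "maximal_repetition (word_pow w k) (i + m * length w) (j + m * length w) p"
proof (rule maximal_repetition_shift[OF assms(1,2)])
  have "(3 + m) * length w \<le> k * length w" using assms(4) by simp
  then show "length (word_pow w 3) + m * length w \<le> length (word_pow w k)"
    by (simp add: algebra_simps)
  then show "word_pow w k ! (x + m * length w) = word_pow w 3 ! x"
    if "x < length (word_pow w 3)" for x
    using that by (intro nth_word_pow_add_mult) auto
qed (use assms(3) in simp)

lemma inj_on_shifted_intervals:
  fixes n :: nat and S :: "(nat \<times> nat \<times> 'a) set"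
  assumes "\<And>i j p. (i, j, p) \<in> S \<Longrightarrow> 0 < i \<and> i \<le> n" "inj_on (\<lambda>(i, j, p). (i, j)) S"
  shows "inj_on (\<lambda>(m, i, j, p). (i + m * n, j + m * n)) (M \<times> S)"
proof (rule inj_onI)
  fix a b
  assume mem: "a \<in> M \<times> S" "b \<in> M \<times> S"
    and eq: "(\<lambda>(m, i, j, p). (i + m * n, j + m * n)) a = (\<lambda>(m, i, j, p). (i + m * n, j + m * n)) b"
  obtain m i j p m' i' j' p' where ab: "a = (m, i, j, p)" "b = (m', i', j', p')"
    by (cases a, cases b) auto
  have "0 < i" "i \<le> n" "0 < i'" "i' \<le> n" using assms(1) mem ab by auto
  then have lt: "i - 1 < n" "i' - 1 < n" and "n \<noteq> 0" by auto
  have "i - 1 + m * n = i' - 1 + m' * n" using eq ab \<open>0 < i\<close> \<open>0 < i'\<close> by auto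
  moreover have "(i - 1 + m * n) div n = m" "(i' - 1 + m' * n) div n = m'"
    using lt \<open>n \<noteq> 0\<close> by simp_all
  ultimately have "m = m'" by metis
  then have "(i, j) = (i', j')" using eq ab by simp
  then show "a = b"
    using inj_onD[OF assms(2), of "(i, j, p)" "(i', j', p')"] mem ab \<open>m = m'\<close> by auto
qed

lemma sum_lessThan_times_set_snd:
  assumes "distinct xs"
  shows "(\<Sum>a\<in>{..<K} \<times> set xs. f (snd a)) = real K * (\<Sum>x\<leftarrow>xs. f x)"
proof -
  have "(\<Sum>a\<in>{..<K} \<times> set xs. f (snd a)) = (\<Sum>m<K. \<Sum>x\<in>set xs. f x)"
    unfolding sum.cartesian_product by (simp add: split_def)
  then show ?thesis using assms by (simp add: sum_list_distinct_conv_sum_set)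
qed

lemma sigma_word_pow_ge:
  fixes w :: "'a list" and T :: "(nat \<times> nat \<times> nat) list"
  assumes "w \<noteq> []" "2 \<le> k"
    and T: "\<And>i j p. (i, j, p) \<in> set T \<Longrightarrow> 0 < i \<and> i \<le> length w \<and> j + 1 < 3 * length w \<and>
              maximal_repetition (word_pow w 3) i j p"
    and distinct: "distinct (map (\<lambda>(i, j, p). (i, j)) T)"
  shows "real (k - 2) * (\<Sum>(i, j, p)\<leftarrow>T. real (j - i + 1) / real p) + real k
    \<le> sigma (word_pow w k)"
proof -
  define n where "n = length w"
  define U where "U = word_pow w k"
  define A where "A = {..<k - 2} \<times> set T"
  define F where "F = (\<lambda>(m, i, j, p :: nat). (i + m * n, j + m * n))"
  define e where "e = (\<lambda>(i::nat, j::nat, p::nat). real (j - i + 1) / real p)"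
  have copies: "F a \<in> runs U \<and> e (snd a) \<le> run_exponent U (F a)" if "a \<in> A" for a
  proof -
    obtain m i j p where a: "a = (m, i, j, p)" by (cases a) auto
    have "maximal_repetition U (i + m * n) (j + m * n) p"
      using maximal_repetition_word_pow_shift[of w i j p m k] T[of i j p] that
      by (auto simp: a A_def U_def n_def)
    then show ?thesis
      using is_run_if_maximal_repetition run_exponent_ge_if_maximal_repetition
      by (fastforce simp: a F_def e_def runs_def)
  qed
  have whole: "maximal_repetition U 0 (k * n - 1) n"
    using maximal_repetition_word_pow[OF assms(1,2)] by (simp add: U_def n_def)
  have "0 < fst (F a)" if "a \<in> A" for a using that T by (auto simp: A_def F_def)
  then have "(0, k * n - 1) \<notin> F ` A" by (metis fst_conv imageE less_irrefl)
  moreover have "inj_on F A"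
    unfolding F_def A_def using T distinct
    by (intro inj_on_shifted_intervals) (auto simp: n_def distinct_map)
  moreover have "F ` A \<subseteq> runs U" using copies by blast
  then have "insert (0, k * n - 1) (F ` A) \<subseteq> runs U"
    using is_run_if_maximal_repetition[OF whole] by (simp add: runs_def)
  ultimately have "run_exponent U (0, k * n - 1) + (\<Sum>a\<in>A. run_exponent U (F a)) \<le> sigma U"
    using sum_run_exponent_le_sigma[of "insert (0, k * n - 1) (F ` A)" U]
    by (simp add: A_def sum.reindex)
  moreover have "real k \<le> run_exponent U (0, k * n - 1)"
    using run_exponent_ge_if_maximal_repetition[OF whole] assms(1,2) by (simp add: n_def)
  moreover have "(\<Sum>a\<in>A. e (snd a)) \<le> (\<Sum>a\<in>A. run_exponent U (F a))"
    using copies by (intro sum_mono) auto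
  moreover have "(\<Sum>a\<in>A. e (snd a)) = real (k - 2) * (\<Sum>t\<leftarrow>T. e t)"
    using distinct unfolding A_def by (simp add: sum_lessThan_times_set_snd distinct_map)
  ultimately show ?thesis by (simp add: U_def e_def)
qed

lemma sum_list_floor_div_le:
  fixes a b :: "'a \<Rightarrow> nat"
  assumes "0 < D"
  shows "real (\<Sum>x\<leftarrow>xs. a x * D div b x) / real D \<le> (\<Sum>x\<leftarrow>xs. real (a x) / real (b x))"
proof (induction xs)
  case (Cons x xs)
  have "real (a x * D div b x) / real D \<le> real (a x * D) / real (b x) / real D"
    by (rule divide_right_mono[OF of_nat_div_le_of_nat]) simp
  also have "\<dots> = real (a x) / real (b x)"
    using assms by simp
  finally show ?case using Cons by (simp add: add_divide_distrib)
qed simp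

definition interior_repetition_check :: "(nat \<Rightarrow> 'a) \<Rightarrow> nat \<Rightarrow> nat \<times> nat \<times> nat \<Rightarrow> bool" where
  "interior_repetition_check f l = (\<lambda>(i, j, p). 0 < i \<and> j + 1 < l \<and> 0 < p \<and> 2 * p \<le> j - i + 1 \<and>
     list_all (\<lambda>x. f x = f (x + p)) [i..<j + 1 - p] \<and>
     f (i - 1) \<noteq> f (i + p - 1) \<and> f (j + 1 - p) \<noteq> f (j + 1))"

lemma maximal_repetition_if_interior_repetition_check:
  assumes "interior_repetition_check f (length u) (i, j, p)" "\<And>x. x < length u \<Longrightarrow> u ! x = f x"
  shows "maximal_repetition u i j p"
  using assms by (auto simp: interior_repetition_check_def maximal_repetition_def list_all_iff)

text \<open>The word, found by computer search, is stored as a balanced tree of lookups so that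
  the simplifier reads any letter in logarithmically many steps; \<open>w_a_b x\<close> is its letter at
  position \<open>a + x\<close>.\<close>
definition w_0_14 :: "nat \<Rightarrow> bool" where "w_0_14 x = [False, True, False, False, True, False, True, True, False, True, False, True, True, False] ! x"
definition w_14_29 :: "nat \<Rightarrow> bool" where "w_14_29 x = [True, False, False, True, False, True, True, False, True, False, False, True, False, True, True] ! x"
definition w_0_29 :: "nat \<Rightarrow> bool" where "w_0_29 x = (if x < 14 then w_0_14 x else w_14_29 (x - 14))"
definition w_29_44 :: "nat \<Rightarrow> bool" where "w_29_44 x = [False, True, False, True, True, False, True, False, False, True, False, True, True, False, True] ! x"
definition w_44_59 :: "nat \<Rightarrow> bool" where "w_44_59 x = [False, True, True, False, True, False, True, True, False, True, False, False, True, False, True] ! x"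
definition w_29_59 :: "nat \<Rightarrow> bool" where "w_29_59 x = (if x < 15 then w_29_44 x else w_44_59 (x - 15))"
definition w_0_59 :: "nat \<Rightarrow> bool" where "w_0_59 x = (if x < 29 then w_0_29 x else w_29_59 (x - 29))"
definition w_59_73 :: "nat \<Rightarrow> bool" where "w_59_73 x = [True, False, True, False, True, True, False, True, False, False, True, False, True, True] ! x"
definition w_73_88 :: "nat \<Rightarrow> bool" where "w_73_88 x = [False, True, False, True, True, False, True, False, False, True, False, True, True, False, True] ! x"
definition w_59_88 :: "nat \<Rightarrow> bool" where "w_59_88 x = (if x < 14 then w_59_73 x else w_73_88 (x - 14))"
definition w_88_103 :: "nat \<Rightarrow> bool" where "w_88_103 x = [False, True, True, False, True, False, True, True, False, True, False, False, True, False, True] ! x"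
definition w_103_118 :: "nat \<Rightarrow> bool" where "w_103_118 x = [True, False, True, False, True, True, False, True, False, False, True, False, True, True, False] ! x"
definition w_88_118 :: "nat \<Rightarrow> bool" where "w_88_118 x = (if x < 15 then w_88_103 x else w_103_118 (x - 15))"
definition w_59_118 :: "nat \<Rightarrow> bool" where "w_59_118 x = (if x < 29 then w_59_88 x else w_88_118 (x - 29))"
definition w_0_118 :: "nat \<Rightarrow> bool" where "w_0_118 x = (if x < 59 then w_0_59 x else w_59_118 (x - 59))"
definition w_118_132 :: "nat \<Rightarrow> bool" where "w_118_132 x = [True, False, False, True, False, True, True, False, True, False, True, True, False, True] ! x"
definition w_132_147 :: "nat \<Rightarrow> bool" where "w_132_147 x = [False, False, True, False, True, True, False, True, False, True, True, False, True, False, True] ! x"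
definition w_118_147 :: "nat \<Rightarrow> bool" where "w_118_147 x = (if x < 14 then w_118_132 x else w_132_147 (x - 14))"
definition w_147_162 :: "nat \<Rightarrow> bool" where "w_147_162 x = [True, False, True, False, False, True, False, True, True, False, True, False, True, True, False] ! x"
definition w_162_177 :: "nat \<Rightarrow> bool" where "w_162_177 x = [True, False, False, True, False, True, True, False, True, False, True, True, False, True, False] ! x"
definition w_147_177 :: "nat \<Rightarrow> bool" where "w_147_177 x = (if x < 15 then w_147_162 x else w_162_177 (x - 15))"
definition w_118_177 :: "nat \<Rightarrow> bool" where "w_118_177 x = (if x < 29 then w_118_147 x else w_147_177 (x - 29))"
definition w_177_192 :: "nat \<Rightarrow> bool" where "w_177_192 x = [False, True, False, True, True, False, True, False, True, True, False, True, False, True, True] ! x"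
definition w_192_207 :: "nat \<Rightarrow> bool" where "w_192_207 x = [False, True, False, False, True, False, True, True, False, True, False, True, True, False, True] ! x"
definition w_177_207 :: "nat \<Rightarrow> bool" where "w_177_207 x = (if x < 15 then w_177_192 x else w_192_207 (x - 15))"
definition w_207_222 :: "nat \<Rightarrow> bool" where "w_207_222 x = [False, False, True, False, True, True, False, True, False, True, True, False, True, False, False] ! x"
definition w_222_237 :: "nat \<Rightarrow> bool" where "w_222_237 x = [True, False, True, True, False, True, False, False, True, False, True, True, False, True, False] ! x"
definition w_207_237 :: "nat \<Rightarrow> bool" where "w_207_237 x = (if x < 15 then w_207_222 x else w_222_237 (x - 15))"
definition w_177_237 :: "nat \<Rightarrow> bool" where "w_177_237 x = (if x < 30 then w_177_207 x else w_207_237 (x - 30))"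
definition w_118_237 :: "nat \<Rightarrow> bool" where "w_118_237 x = (if x < 59 then w_118_177 x else w_177_237 (x - 59))"
definition w_0_237 :: "nat \<Rightarrow> bool" where "w_0_237 x = (if x < 118 then w_0_118 x else w_118_237 (x - 118))"
definition w_237_251 :: "nat \<Rightarrow> bool" where "w_237_251 x = [True, True, False, True, False, False, True, False, True, True, False, True, False, True] ! x"
definition w_251_266 :: "nat \<Rightarrow> bool" where "w_251_266 x = [True, False, True, False, True, True, False, True, False, False, True, False, True, True, False] ! x"
definition w_237_266 :: "nat \<Rightarrow> bool" where "w_237_266 x = (if x < 14 then w_237_251 x else w_251_266 (x - 14))"
definition w_266_281 :: "nat \<Rightarrow> bool" where "w_266_281 x = [True, False, True, True, False, True, False, False, True, False, True, True, False, True, False] ! x"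
definition w_281_296 :: "nat \<Rightarrow> bool" where "w_281_296 x = [True, True, False, True, False, False, True, False, True, True, False, True, False, True, True] ! x"
definition w_266_296 :: "nat \<Rightarrow> bool" where "w_266_296 x = (if x < 15 then w_266_281 x else w_281_296 (x - 15))"
definition w_237_296 :: "nat \<Rightarrow> bool" where "w_237_296 x = (if x < 29 then w_237_266 x else w_266_296 (x - 29))"
definition w_296_311 :: "nat \<Rightarrow> bool" where "w_296_311 x = [False, True, False, True, True, False, True, False, False, True, False, True, True, False, True] ! x"
definition w_311_326 :: "nat \<Rightarrow> bool" where "w_311_326 x = [False, True, True, False, True, False, False, True, False, True, True, False, True, False, False] ! x"
definition w_296_326 :: "nat \<Rightarrow> bool" where "w_296_326 x = (if x < 15 then w_296_311 x else w_311_326 (x - 15))"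
definition w_326_341 :: "nat \<Rightarrow> bool" where "w_326_341 x = [True, False, True, True, False, True, False, True, True, False, True, False, False, True, False] ! x"
definition w_341_356 :: "nat \<Rightarrow> bool" where "w_341_356 x = [True, True, False, True, False, True, True, False, True, False, True, True, False, True, False] ! x"
definition w_326_356 :: "nat \<Rightarrow> bool" where "w_326_356 x = (if x < 15 then w_326_341 x else w_341_356 (x - 15))"
definition w_296_356 :: "nat \<Rightarrow> bool" where "w_296_356 x = (if x < 30 then w_296_326 x else w_326_356 (x - 30))"
definition w_237_356 :: "nat \<Rightarrow> bool" where "w_237_356 x = (if x < 59 then w_237_296 x else w_296_356 (x - 59))"
definition w_356_370 :: "nat \<Rightarrow> bool" where "w_356_370 x = [False, True, False, True, True, False, True, False, True, True, False, True, False, False] ! x"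
definition w_370_385 :: "nat \<Rightarrow> bool" where "w_370_385 x = [True, False, True, True, False, True, False, True, True, False, True, False, False, True, False] ! x"
definition w_356_385 :: "nat \<Rightarrow> bool" where "w_356_385 x = (if x < 14 then w_356_370 x else w_370_385 (x - 14))"
definition w_385_400 :: "nat \<Rightarrow> bool" where "w_385_400 x = [True, True, False, True, False, False, True, False, True, True, False, True, False, True, True] ! x"
definition w_400_415 :: "nat \<Rightarrow> bool" where "w_400_415 x = [False, True, False, False, True, False, True, True, False, True, False, True, True, False, True] ! x"
definition w_385_415 :: "nat \<Rightarrow> bool" where "w_385_415 x = (if x < 15 then w_385_400 x else w_400_415 (x - 15))"
definition w_356_415 :: "nat \<Rightarrow> bool" where "w_356_415 x = (if x < 29 then w_356_385 x else w_385_415 (x - 29))"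
definition w_415_430 :: "nat \<Rightarrow> bool" where "w_415_430 x = [False, True, True, False, True, False, False, True, False, True, True, False, True, False, True] ! x"
definition w_430_445 :: "nat \<Rightarrow> bool" where "w_430_445 x = [True, False, True, False, False, True, False, True, True, False, True, False, True, True, False] ! x"
definition w_415_445 :: "nat \<Rightarrow> bool" where "w_415_445 x = (if x < 15 then w_415_430 x else w_430_445 (x - 15))"
definition w_445_460 :: "nat \<Rightarrow> bool" where "w_445_460 x = [True, False, False, True, False, True, True, False, True, False, True, True, False, True, False] ! x"
definition w_460_475 :: "nat \<Rightarrow> bool" where "w_460_475 x = [True, True, False, True, False, False, True, False, True, True, False, True, False, True, True] ! x"
definition w_445_475 :: "nat \<Rightarrow> bool" where "w_445_475 x = (if x < 15 then w_445_460 x else w_460_475 (x - 15))"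
definition w_415_475 :: "nat \<Rightarrow> bool" where "w_415_475 x = (if x < 30 then w_415_445 x else w_445_475 (x - 30))"
definition w_356_475 :: "nat \<Rightarrow> bool" where "w_356_475 x = (if x < 59 then w_356_415 x else w_415_475 (x - 59))"
definition w_237_475 :: "nat \<Rightarrow> bool" where "w_237_475 x = (if x < 119 then w_237_356 x else w_356_475 (x - 119))"
definition w_0_475 :: "nat \<Rightarrow> bool" where "w_0_475 x = (if x < 237 then w_0_237 x else w_237_475 (x - 237))"

lemmas dense_word_letter_defs = w_0_14_def w_14_29_def w_0_29_def w_29_44_def w_44_59_def w_29_59_def w_0_59_def w_59_73_def w_73_88_def w_59_88_def w_88_103_def w_103_118_def w_88_118_def w_59_118_def w_0_118_def w_118_132_def w_132_147_def w_118_147_def w_147_162_def w_162_177_def w_147_177_def w_118_177_def w_177_192_def w_192_207_def w_177_207_def w_207_222_def w_222_237_def w_207_237_def w_177_237_def w_118_237_def w_0_237_def w_237_251_def w_251_266_def w_237_266_def w_266_281_def w_281_296_def w_266_296_def w_237_296_def w_296_311_def w_311_326_def w_296_326_def w_326_341_def w_341_356_def w_326_356_def w_296_356_def w_237_356_def w_356_370_def w_370_385_def w_356_385_def w_385_400_def w_400_415_def w_385_415_def w_356_415_def w_415_430_def w_430_445_def w_415_445_def w_445_460_def w_460_475_def w_445_475_def w_415_475_def w_356_475_def w_237_475_def w_0_475_def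

definition dense_word :: "bool list" where
  "dense_word = map w_0_475 [0..<475]"

definition dense_word_cube_letter :: "nat \<Rightarrow> bool" where
  "dense_word_cube_letter x =
     (if x < 475 then w_0_475 x else if x < 950 then w_0_475 (x - 475) else w_0_475 (x - 950))"

lemma length_dense_word: "length dense_word = 475"
  by (simp add: dense_word_def)

lemma nth_dense_word_cube: "x < 1425 \<Longrightarrow> word_pow dense_word 3 ! x = dense_word_cube_letter x"
  by (auto simp: nth_word_pow length_dense_word dense_word_def dense_word_cube_letter_def
      mod_if le_mod_geq)

definition dense_word_runs :: "(nat \<times> nat \<times> nat) list" where
  "dense_word_runs = [(2,3,1), (3,6,2), (3,15,5), (4,9,3), (6,7,1), (7,11,2), (8,31,8), (9,14,3), (11,12,1), (12,15,2), (13,18,3), (15,16,1), (16,19,2), (16,49,13), (16,80,31), (16,119,44), (17,22,3), (19,20,1), (20,23,2), (21,26,3), (23,24,1), (24,27,2), (24,36,5), (24,67,18), (25,30,3), (27,28,1), (28,32,2), (29,44,8), (30,35,3), (32,33,1), (33,36,2), (34,39,3), (36,37,1), (37,40,2), (37,54,5), (38,43,3), (40,41,1), (41,45,2), (42,93,13), (43,48,3), (45,46,1), (46,50,2), (47,62,8), (48,53,3), (50,51,1), (51,54,2), (52,57,3), (54,55,1), (55,58,2), (55,67,5), (55,119,31), (56,61,3), (58,59,1), (59,63,2), (60,75,8), (60,171,52), (61,66,3), (63,64,1), (64,67,2), (65,70,3), (67,68,1), (68,71,2), (68,80,5), (68,111,18), (69,74,3), (71,72,1), (72,76,2), (73,88,8),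 (74,79,3), (76,77,1), (77,80,2), (78,83,3), (80,81,1), (81,84,2), (81,98,5), (82,87,3), (84,85,1), (85,89,2), (86,119,13), (86,324,109), (86,659,270), (87,92,3), (89,90,1), (90,94,2), (91,106,8), (91,140,21), (92,97,3), (94,95,1), (95,98,2), (96,101,3), (98,99,1), (99,102,2), (99,111,5), (100,105,3), (102,103,1), (103,107,2), (104,127,8), (105,110,3), (107,108,1), (108,111,2), (109,114,3), (111,112,1), (112,115,2), (112,145,13), (112,176,31), (112,228,44), (113,118,3), (115,116,1), (116,119,2), (117,122,3), (119,120,1), (120,123,2), (120,132,5), (120,163,18), (121,126,3), (123,124,1), (124,128,2), (125,140,8), (126,131,3), (128,129,1), (129,132,2), (130,135,3), (132,133,1), (133,136,2), (133,150,5), (134,139,3), (136,137,1), (137,141,2), (138,189,13), (139,144,3), (141,142,1), (142,146,2), (143,158,8), (144,149,3), (146,147,1), (147,150,2), (148,153,3), (150,151,1), (151,154,2), (151,163,5), (151,220,31), (152,157,3), (154,155,1), (155,159,2), (156,171,8), (156,293,65), (156,485,161), (157,162,3), (159,160,1), (160,163,2), (161,166,3), (163,164,1), (164,167,2), (164,176,5), (164,207,18), (165,170,3), (167,168,1), (168,172,2), (169,184,8), (170,175,3), (172,173,1), (173,176,2), (174,179,3), (176,177,1), (177,180,2), (177,194,5), (178,183,3), (180,181,1), (181,185,2), (182,228,13), (183,188,3), (185,186,1), (186,190,2), (187,202,8), (187,254,34), (188,193,3), (190,191,1), (191,194,2), (192,197,3), (194,195,1), (195,198,2), (195,207,5), (195,389,96),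 (196,201,3), (198,199,1), (199,203,2), (200,215,8), (200,249,21), (201,206,3), (203,204,1), (204,207,2), (205,210,3), (207,208,1), (208,211,2), (208,220,5), (209,214,3), (211,212,1), (212,216,2), (213,236,8), (214,219,3), (216,217,1), (217,220,2), (218,223,3), (220,221,1), (221,224,2), (221,254,13), (221,285,31), (221,324,44), (222,227,3), (224,225,1), (225,228,2), (226,231,3), (228,229,1), (229,232,2), (229,241,5), (229,272,18), (230,235,3), (232,233,1), (233,237,2), (234,249,8), (235,240,3), (237,238,1), (238,241,2), (239,244,3), (241,242,1), (242,245,2), (242,259,5), (243,248,3), (245,246,1), (246,250,2), (247,298,13), (248,253,3), (250,251,1), (251,255,2), (252,267,8), (253,258,3), (255,256,1), (256,259,2), (257,262,3), (259,260,1), (260,263,2), (260,272,5), (260,324,31), (261,266,3), (263,264,1), (264,268,2), (265,280,8), (265,376,52), (266,271,3), (268,269,1), (269,272,2), (270,275,3), (272,273,1), (273,276,2), (273,285,5), (273,316,18), (274,279,3), (276,277,1), (277,281,2), (278,293,8), (279,284,3), (281,282,1), (282,285,2), (283,288,3), (285,286,1), (286,289,2), (286,303,5), (287,292,3), (289,290,1), (290,294,2), (291,324,13), (291,454,65), (292,297,3), (294,295,1), (295,299,2), (296,311,8), (296,345,21), (297,302,3), (299,300,1), (300,303,2), (301,306,3), (303,304,1), (304,307,2), (304,316,5), (305,310,3), (307,308,1), (308,312,2), (309,332,8), (310,315,3), (312,313,1), (313,316,2), (314,319,3), (316,317,1), (317,320,2), (317,350,13), (317,381,31), (317,594,109), (318,323,3),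 (320,321,1), (321,324,2), (322,327,3), (324,325,1), (325,328,2), (325,337,5), (325,368,18), (326,331,3), (328,329,1), (329,333,2), (330,345,8), (331,336,3), (333,334,1), (334,337,2), (335,340,3), (337,338,1), (338,341,2), (338,355,5), (339,344,3), (341,342,1), (342,346,2), (343,389,13), (344,349,3), (346,347,1), (347,351,2), (348,363,8), (348,415,34), (349,354,3), (351,352,1), (352,355,2), (353,358,3), (355,356,1), (356,359,2), (356,368,5), (356,864,205), (357,362,3), (359,360,1), (360,364,2), (361,376,8), (361,410,21), (362,367,3), (364,365,1), (365,368,2), (366,371,3), (368,369,1), (369,372,2), (369,381,5), (370,375,3), (372,373,1), (373,377,2), (374,397,8), (375,380,3), (377,378,1), (378,381,2), (379,384,3), (381,382,1), (382,385,2), (382,415,13), (382,446,31), (382,498,44), (383,388,3), (385,386,1), (386,389,2), (387,392,3), (389,390,1), (390,393,2), (390,402,5), (390,433,18), (391,396,3), (393,394,1), (394,398,2), (395,410,8), (396,401,3), (398,399,1), (399,402,2), (400,405,3), (402,403,1), (403,406,2), (403,420,5), (404,409,3), (406,407,1), (407,411,2), (408,459,13), (409,414,3), (411,412,1), (412,416,2), (413,428,8), (414,419,3), (416,417,1), (417,420,2), (418,423,3), (420,421,1), (421,424,2), (421,433,5), (421,490,31), (422,427,3), (424,425,1), (425,429,2), (426,441,8), (426,563,65), (427,432,3), (429,430,1), (430,433,2), (431,436,3), (433,434,1), (434,437,2), (434,446,5), (434,477,18), (435,440,3), (437,438,1), (438,442,2), (439,454,8), (440,445,3), (442,443,1), (443,446,2),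 (444,449,3), (446,447,1), (447,450,2), (447,464,5), (448,453,3), (450,451,1), (451,455,2), (452,498,13), (453,458,3), (455,456,1), (456,460,2), (457,472,8), (457,524,34), (458,463,3), (460,461,1), (461,464,2), (462,467,3), (464,465,1), (465,468,2), (465,477,5), (465,690,96), (466,471,3), (468,469,1), (469,473,2), (470,485,8), (470,519,21), (471,476,3), (473,474,1), (474,477,2), (475,480,3)]"

lemma dense_word_runs_check:
  "list_all (\<lambda>(i, j, p). i \<le> 475 \<and> interior_repetition_check dense_word_cube_letter 1425 (i, j, p))
     dense_word_runs"
  unfolding dense_word_runs_def
  by (simp add: interior_repetition_check_def dense_word_cube_letter_def dense_word_letter_defs
      upt_rec[of 1]) \<comment> \<open>\<open>upt_rec_numeral\<close> does not cover the lower bound \<open>1\<close>\<close>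

lemma dense_word_runs_sorted: "sorted_wrt (<) (map (\<lambda>(i, j, p). (i, j)) dense_word_runs)"
  unfolding dense_word_runs_def by (simp del: sorted_wrt.simps(2) add: sorted_wrt2_simps)

lemma dense_word_runs_exponent_sum:
  "(\<Sum>(i, j, p)\<leftarrow>dense_word_runs. (j - i + 1) * 1000000 div p) = 966661588"
  unfolding dense_word_runs_def by simp

lemma dense_word_runs_exponent_sum_ge:
  "966661588 / 1000000 \<le> (\<Sum>(i, j, p)\<leftarrow>dense_word_runs. real (j - i + 1) / real p)"
  using sum_list_floor_div_le[of 1000000 "\<lambda>(i, j, p). j - i + 1" "\<lambda>(i, j, p). p" dense_word_runs]
    dense_word_runs_exponent_sum
  by (simp add: split_def)

lemma dense_word_runs_maximal_repetitions:
  assumes "(i, j, p) \<in> set dense_word_runs"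
  shows "0 < i \<and> i \<le> length dense_word \<and> j + 1 < 3 * length dense_word \<and>
    maximal_repetition (word_pow dense_word 3) i j p"
proof -
  have check: "i \<le> 475" "interior_repetition_check dense_word_cube_letter 1425 (i, j, p)"
    using dense_word_runs_check assms by (auto simp: list_all_iff)
  then have "maximal_repetition (word_pow dense_word 3) i j p"
    by (intro maximal_repetition_if_interior_repetition_check)
      (simp_all add: length_dense_word nth_dense_word_cube)
  then show ?thesis using check by (simp add: interior_repetition_check_def length_dense_word)
qed

lemma sigma_dense_word_pow_gt:
  assumes "1866 \<le> k"
  shows "2.035 * real (length (word_pow dense_word k)) < sigma (word_pow dense_word k)"
proof -
  define S where "S = (\<Sum>(i, j, p)\<leftarrow>dense_word_runs. real (j - i + 1) / real p)"
  have "real (k - 2) * S + real k \<le> sigma (word_pow dense_word k)"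
    unfolding S_def
  proof (rule sigma_word_pow_ge)
    show "distinct (map (\<lambda>(i, j, p). (i, j)) dense_word_runs)"
      using dense_word_runs_sorted by (simp add: strict_sorted_iff)
  qed (use assms dense_word_runs_maximal_repetitions in \<open>auto simp: dense_word_def\<close>)
  moreover have "(real k - 2) * (966661588 / 1000000) \<le> (real k - 2) * S"
    using dense_word_runs_exponent_sum_ge assms unfolding S_def by (intro mult_left_mono) auto
  ultimately show ?thesis
    using assms by (simp add: length_dense_word of_nat_diff)
qed

theorem theorem1:
  shows "infinite {w :: bool list. sigma w / real (length w) > 2.035}"
proof
  assume "finite {w :: bool list. sigma w / real (length w) > 2.035}"
  moreover have "word_pow dense_word ` {1866..} \<subseteq> {w. sigma w / real (length w) > 2.035}"
    using sigma_dense_word_pow_gt by (auto simp: length_dense_word pos_less_divide_eq mult.commute)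
  ultimately have "finite (word_pow dense_word ` {1866..})" by (rule finite_subset[rotated])
  moreover have "inj_on (word_pow dense_word) {1866..}"
    by (rule inj_onI) (metis length_word_pow length_dense_word mult_right_cancel zero_neq_numeral)
  ultimately show False using infinite_Ici[of "1866 :: nat"] by (simp add: finite_image_iff)
qed

end
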